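(* Let $q\in(0,1)$, a fixed partition $\mathcal N=\mathcal H_0\sqcup\mathcal H_1$, and $p\in[0,1]^N$ be given. For each $i\in\mathcal L\cup\mathcal R\cup\{\tilde k\}$ let $$\mathrm{FDP}_i:=\max_{p'\in[0,1]^N:\ \|p-p'\|_0\le1,\ \tilde k(p')=i}\mathrm{FDP}[BH_q;p'].$$ Then $$\max_{p'\in[0,1]^N:\ \|p-p'\|_0\le1}\mathrm{FDP}[BH_q;p']=\max_{i\in\mathcal L\cup\mathcal R\cup\{\tilde k\}}\mathrm{FDP}_i.$$
   Context: $\mathcal N=\{1,\dots,N\}$. For $x\in[0,1]^N$, $B^{\mathcal N}_{1:i}(x)=|\{j\in\mathcal N:0\le x_j<iq/N\}|$ ($B^{\mathcal N}_{1:0}=0$), $\tilde k(x)=\max\{i\in\{0,\dots,N\}:B^{\mathcal N}_{1:i}(x)=i\}$; the Benjamini–Hochberg procedure $BH_q$ rejects tests $j$ with $x_j<\tilde k(x)q/N$, and $\mathrm{FDP}[BH_q;x]=|\{j\in\mathcal H_0:x_j<\tilde k(x)q/N\}|/\max(\tilde k(x),1)$. Write $\tilde k=\tilde k(p)$, $B^{\mathcal N}_{1:i}=B^{\mathcal N}_{1:i}(p)$. $\|p-p'\|_0$ is the number of differing coordinates. $\mathcal L:=\{i\in\{\tilde k+1,\dots,N\}:B^{\mathcal N}_{1:i}=i-1\}$. $i^*:=\max(0,\max\{i\in\{1,\dots,\tilde k-1\}:B^{\mathcal N}_{1:i}=i+1\})$ (inner maximum omitted if empty), and $\mathcal R:=\{i\in\{i^*+1,\dots,\tilde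 k-1\}:B^{\mathcal N}_{1:i}=i\}\cup\{i^*\}$. *)

theory Defs
  imports Main Complex_Main
begin

text \<open>Vectors in [0,1]^N are represented as functions nat => real; only the
  coordinates 1..N are relevant.\<close>

definition Bcount :: "nat \<Rightarrow> real \<Rightarrow> (nat \<Rightarrow> real) \<Rightarrow> nat \<Rightarrow> nat" where
  "Bcount N q x i = card {j \<in> {1..N}. 0 \<le> x j \<and> x j < real i * q / real N}"

definition ktilde :: "nat \<Rightarrow> real \<Rightarrow> (nat \<Rightarrow> real) \<Rightarrow> nat" where
  "ktilde N q x = Max {i \<in> {0..N}. Bcount N q x i = i}"

definition FDP_BH :: "nat \<Rightarrow> real \<Rightarrow> nat set \<Rightarrow> (nat \<Rightarrow> real) \<Rightarrow> real" where
  "FDP_BH N q H0 x =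
     real (card {j \<in> H0. x j < real (ktilde N q x) * q / real N}) / real (max (ktilde N q x) 1)"

definition hamming :: "nat \<Rightarrow> (nat \<Rightarrow> real) \<Rightarrow> (nat \<Rightarrow> real) \<Rightarrow> nat" where
  "hamming N p p' = card {j \<in> {1..N}. p j \<noteq> p' j}"

definition unit_cube :: "nat \<Rightarrow> (nat \<Rightarrow> real) set" where
  "unit_cube N = {x. \<forall>j\<in>{1..N}. 0 \<le> x j \<and> x j \<le> 1}"

definition nbhd1 :: "nat \<Rightarrow> (nat \<Rightarrow> real) \<Rightarrow> (nat \<Rightarrow> real) set" where
  "nbhd1 N p = {p' \<in> unit_cube N. hamming N p p' \<le> 1}"

definition Lset :: "nat \<Rightarrow> real \<Rightarrow> (nat \<Rightarrow> real) \<Rightarrow> nat set" where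
  "Lset N q p = {i \<in> {ktilde N q p + 1..N}. Bcount N q p i = i - 1}"

definition istar :: "nat \<Rightarrow> real \<Rightarrow> (nat \<Rightarrow> real) \<Rightarrow> nat" where
  "istar N q p = (let S = {i \<in> {1..ktilde N q p - 1}. Bcount N q p i = i + 1}
                  in max 0 (if S = {} then 0 else Max S))"

definition Rset :: "nat \<Rightarrow> real \<Rightarrow> (nat \<Rightarrow> real) \<Rightarrow> nat set" where
  "Rset N q p = {i \<in> {istar N q p + 1..ktilde N q p - 1}. Bcount N q p i = i} \<union> {istar N q p}"

definition FDP_i :: "nat \<Rightarrow> real \<Rightarrow> nat set \<Rightarrow> (nat \<Rightarrow> real) \<Rightarrow> nat \<Rightarrow> real" where
  "FDP_i N q H0 p i = Max (FDP_BH N q H0 ` {p' \<in> nbhd1 N p. ktilde N q p' = i})"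

definition FDP_i_feasible :: "nat \<Rightarrow> real \<Rightarrow> (nat \<Rightarrow> real) \<Rightarrow> nat \<Rightarrow> bool" where
  "FDP_i_feasible N q p i = ({p' \<in> nbhd1 N p. ktilde N q p' = i} \<noteq> {})"

end

theory Submission imports Defs begin

(* Write B i for the count B_{1:i}(p), so that k~(p) is the last fixed point of the
   nondecreasing map B on {0..N}. Changing one p-value changes every B i by at most one.
   Since B i - i drops by at most one per step, a discrete intermediate value argument
   shows B i < i beyond the last fixed point; hence a new last fixed point k' > k~ has
   B k' = k' - 1, i.e. lies in L. If k' < k~, the changed p-value was raised above
   k~ q/N, so no count up to k~ grows. Then B' i* >= B i* - 1 = i* forces k' >= i*, and
   a value B k' > k' strictly above i* would cross the line B i = i + 1 again before k~,
   contradicting the maximality of i*. So k~(p') ranges over L, R and {k~}, and the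
   maximum over the neighbourhood splits along the fibres of k~. *)

lemma Max_image_eq_Max_fibres:
  fixes f :: "'a \<Rightarrow> 'b::linorder"
  assumes "finite (f ` S)" and "S \<noteq> {}" and "g ` S \<subseteq> I" and "finite I"
  shows "Max (f ` S) = Max ((\<lambda>i. Max (f ` {x \<in> S. g x = i})) ` {i \<in> I. {x \<in> S. g x = i} \<noteq> {}})"
proof (rule Max_eq_if)
  have fibre_finite: "finite (f ` {x \<in> S. g x = i})" for i
    using assms(1) by (rule finite_subset[rotated]) auto
  then show "\<forall>a\<in>f ` S. \<exists>b\<in>(\<lambda>i. Max (f ` {x \<in> S. g x = i})) ` {i \<in> I. {x \<in> S. g x = i} \<noteq> {}}. a \<le> b"
    using assms(3) by (fastforce intro!: bexI[of _ "g _"])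
  show "\<forall>b\<in>(\<lambda>i. Max (f ` {x \<in> S. g x = i})) ` {i \<in> I. {x \<in> S. g x = i} \<noteq> {}}. \<exists>a\<in>f ` S. b \<le> a"
    using fibre_finite by (fastforce dest: Max_in)
qed (use assms in auto)

lemma mono_crosses_diagonal:
  fixes B :: "nat \<Rightarrow> nat"
  assumes "mono B" and "a \<le> b" and "a + c \<le> B a" and "B b \<le> b + c"
  shows "\<exists>z\<in>{a..b}. B z = z + c"
  using assms(2,4)
proof (induction b rule: dec_induct)
  case base
  then show ?case using assms(3) by auto
next
  case (step b)
  show ?case
  proof (cases "B b \<le> b + c")
    case True
    then show ?thesis using step.IH by auto
  next
    case False
    then have "B (Suc b) = Suc b + c"
      using monoD[OF assms(1), of b "Suc b"] step.prems by simp
    then show ?thesis using step.hyps by (intro bexI[of _ "Suc b"]) auto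
  qed
qed

definition last_fixpoint :: "nat \<Rightarrow> (nat \<Rightarrow> nat) \<Rightarrow> nat" where
  "last_fixpoint N B = Max {i \<in> {0..N}. B i = i}"

lemma last_fixpoint_in:
  assumes "B 0 = 0"
  shows "last_fixpoint N B \<in> {i \<in> {0..N}. B i = i}"
  unfolding last_fixpoint_def using assms by (intro Max_in) auto

lemma last_fixpoint_greatest: "i \<le> N \<Longrightarrow> B i = i \<Longrightarrow> i \<le> last_fixpoint N B"
  unfolding last_fixpoint_def by (intro Max_ge) auto

lemma le_last_fixpoint:
  assumes "mono B" and "B N \<le> N" and "i \<le> N" and "i \<le> B i"
  shows "i \<le> last_fixpoint N B"
proof -
  obtain z where "z \<in> {i..N}" and "B z = z"
    using mono_crosses_diagonal[of B i N 0] assms by auto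
  then show ?thesis using last_fixpoint_greatest[of z N B] by auto
qed

lemma last_fixpoint_increase:
  fixes B B' :: "nat \<Rightarrow> nat" and N :: nat
  defines "k' \<equiv> last_fixpoint N B'"
  assumes "mono B" and "B N \<le> N" and "B' 0 = 0" and "\<And>i. B' i \<le> B i + 1"
    and "last_fixpoint N B < k'"
  shows "B k' = k' - 1"
proof -
  have "k' \<le> N" and "B' k' = k'"
    unfolding k'_def using last_fixpoint_in[of B' N] assms(4) by auto
  moreover have "\<not> k' \<le> B k'"
    using le_last_fixpoint[OF assms(2,3)] \<open>k' \<le> N\<close> assms(6) by fastforce
  ultimately show ?thesis using assms(5)[of k'] by linarith
qed

lemma last_fixpoint_decrease:
  fixes B B' :: "nat \<Rightarrow> nat" and N s :: nat
  defines "k \<equiv> last_fixpoint N B" and "k' \<equiv> last_fixpoint N B'"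
  assumes mono: "mono B" "mono B'" and zero: "B 0 = 0" "B' 0 = 0"
    and bound: "B N \<le> N" "B' N \<le> N"
    and close: "\<And>i. B i \<le> B' i + 1"
    and one_sided: "\<And>i. B' k < B k \<Longrightarrow> i \<le> k \<Longrightarrow> B' i \<le> B i"
    and s_greatest: "\<And>i. 0 < i \<Longrightarrow> i < k \<Longrightarrow> B i = i + 1 \<Longrightarrow> i \<le> s"
    and s_cases: "s = 0 \<or> (s < k \<and> B s = s + 1)"
    and "k' < k"
  shows "k' = s \<or> (s < k' \<and> B k' = k')"
proof -
  have k: "k \<le> N" "B k = k" and k': "k' \<le> N" "B' k' = k'"
    unfolding k_def k'_def using last_fixpoint_in zero by auto
  have "B' k < k"
    using le_last_fixpoint[OF mono(2) bound(2) k(1)] \<open>k' < k\<close> unfolding k'_def by fastforce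
  then have below: "B' i \<le> B i" if "i \<le> k" for i
    using one_sided that k(2) by simp
  have "s \<le> k'"
    using s_cases
  proof
    assume "s < k \<and> B s = s + 1"
    then show "s \<le> k'"
      unfolding k'_def using le_last_fixpoint[OF mono(2) bound(2)] close[of s] k(1) by simp
  qed simp
  moreover have "B k' = k'" if "s < k'"
  proof (rule ccontr)
    assume "B k' \<noteq> k'"
    then have "k' + 1 \<le> B k'" using below[of k'] k'(2) \<open>k' < k\<close> by simp
    then obtain z where z: "z \<in> {k'..k}" "B z = z + 1"
      using mono_crosses_diagonal[OF mono(1), of k' k 1] k(2) \<open>k' < k\<close> by auto
    then have "z < k" using k(2) by (cases "z = k") auto
    then show False using s_greatest[of z] z that by auto
  qed
  ultimately show ?thesis by linarith
qed

lemma ktilde_eq_last_fixpoint: "ktilde N q x = last_fixpoint N (Bcount N q x)"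
  by (simp add: ktilde_def last_fixpoint_def)

lemma mono_Bcount:
  assumes "0 \<le> q"
  shows "mono (Bcount N q x)"
proof (rule monoI)
  fix i j :: nat
  assume "i \<le> j"
  then have "real i * q / real N \<le> real j * q / real N"
    using assms by (simp add: divide_right_mono mult_right_mono)
  then show "Bcount N q x i \<le> Bcount N q x j"
    unfolding Bcount_def by (intro card_mono) auto
qed

lemma Bcount_0: "Bcount N q x 0 = 0"
  by (simp add: Bcount_def)

lemma Bcount_le: "Bcount N q x i \<le> N"
  unfolding Bcount_def by (rule order.trans[OF card_mono[of "{1..N}"]]) auto

lemma ktilde_le: "ktilde N q x \<le> N"
  using last_fixpoint_in[of "Bcount N q x" N] Bcount_0 by (simp add: ktilde_eq_last_fixpoint)

lemma Bcount_split_coordinate: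
  "Bcount N q x i = card {j \<in> {1..N} - {j0}. 0 \<le> x j \<and> x j < real i * q / real N}
     + (if j0 \<in> {1..N} \<and> 0 \<le> x j0 \<and> x j0 < real i * q / real N then 1 else 0)"
proof (cases "j0 \<in> {1..N} \<and> 0 \<le> x j0 \<and> x j0 < real i * q / real N")
  case True
  then have "{j \<in> {1..N}. 0 \<le> x j \<and> x j < real i * q / real N}
        = insert j0 {j \<in> {1..N} - {j0}. 0 \<le> x j \<and> x j < real i * q / real N}" by auto
  then show ?thesis unfolding Bcount_def using True by simp
next
  case False
  then have "{j \<in> {1..N}. 0 \<le> x j \<and> x j < real i * q / real N}
        = {j \<in> {1..N} - {j0}. 0 \<le> x j \<and> x j < real i * q / real N}" by auto
  then show ?thesis unfolding Bcount_def using False by simp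
qed

context
  fixes N j0 :: nat and x y :: "nat \<Rightarrow> real"
  assumes agree: "\<And>j. j \<in> {1..N} \<Longrightarrow> j \<noteq> j0 \<Longrightarrow> x j = y j"
begin

lemma Bcount_split_agree:
  "Bcount N q y i = card {j \<in> {1..N} - {j0}. 0 \<le> x j \<and> x j < real i * q / real N}
     + (if j0 \<in> {1..N} \<and> 0 \<le> y j0 \<and> y j0 < real i * q / real N then 1 else 0)"
proof -
  have "{j \<in> {1..N} - {j0}. 0 \<le> y j \<and> y j < real i * q / real N}
      = {j \<in> {1..N} - {j0}. 0 \<le> x j \<and> x j < real i * q / real N}"
    using agree by auto
  then show ?thesis using Bcount_split_coordinate[of N q y i j0] by simp
qed

lemma Bcount_change_coordinate: "Bcount N q y i \<le> Bcount N q x i + 1"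
  using Bcount_split_agree Bcount_split_coordinate[of N q x i j0] by simp

lemma Bcount_decrease_coordinate:
  assumes "0 \<le> q" and nonneg: "\<And>j. j \<in> {1..N} \<Longrightarrow> 0 \<le> y j"
    and "Bcount N q y k < Bcount N q x k" and "i \<le> k"
  shows "Bcount N q y i \<le> Bcount N q x i"
proof -
  have "j0 \<in> {1..N}" and "\<not> y j0 < real k * q / real N"
    using assms(3) nonneg Bcount_split_agree[of q k] Bcount_split_coordinate[of N q x k j0]
    by (auto split: if_splits)
  moreover have "real i * q / real N \<le> real k * q / real N"
    using assms(1,4) by (simp add: divide_right_mono mult_right_mono)
  ultimately have "\<not> y j0 < real i * q / real N" by linarith
  then show ?thesis using Bcount_split_agree[of q i] Bcount_split_coordinate[of N q x i j0] by simp
qed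

end

lemma hamming_le_1_agree_except:
  assumes "hamming N p p' \<le> 1"
  obtains j0 where "\<And>j. j \<in> {1..N} \<Longrightarrow> j \<noteq> j0 \<Longrightarrow> p j = p' j"
proof (cases "{j \<in> {1..N}. p j \<noteq> p' j} = {}")
  case True
  then show ?thesis using that by blast
next
  case False
  then obtain j1 where "j1 \<in> {j \<in> {1..N}. p j \<noteq> p' j}" by blast
  moreover have "\<forall>a\<in>{j \<in> {1..N}. p j \<noteq> p' j}. \<forall>b\<in>{j \<in> {1..N}. p j \<noteq> p' j}. a = b"
    using assms card_le_Suc0_iff_eq[of "{j \<in> {1..N}. p j \<noteq> p' j}"] by (simp add: hamming_def)
  ultimately show ?thesis using that[of j1] by blast
qed

lemma istar_eq_Max:
  "istar N q p = (let S = {i \<in> {1..ktilde N q p - 1}. Bcount N q p i = i + 1}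
                  in if S = {} then 0 else Max S)"
  by (simp only: istar_def max_0L)

lemma istar_cases:
  "istar N q p = 0 \<or> (istar N q p < ktilde N q p \<and> Bcount N q p (istar N q p) = istar N q p + 1)"
proof -
  define S where "S = {i \<in> {1..ktilde N q p - 1}. Bcount N q p i = i + 1}"
  have "Max S \<in> S" if "S \<noteq> {}" using that by (intro Max_in) (auto simp: S_def)
  then show ?thesis unfolding istar_eq_Max Let_def S_def[symmetric] by (auto simp: S_def)
qed

lemma istar_greatest:
  assumes "0 < i" and "i < ktilde N q p" and "Bcount N q p i = i + 1"
  shows "i \<le> istar N q p"
proof -
  define S where "S = {i \<in> {1..ktilde N q p - 1}. Bcount N q p i = i + 1}"
  have "i \<in> S" using assms by (auto simp: S_def)
  then show ?thesis unfolding istar_eq_Max Let_def S_def[symmetric]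
    by (auto simp: S_def intro: Max_ge)
qed

lemma ktilde_nbhd1:
  assumes "0 \<le> q" and "p' \<in> nbhd1 N p"
  shows "ktilde N q p' \<in> Lset N q p \<union> Rset N q p \<union> {ktilde N q p}"
proof -
  obtain j0 where agree: "\<And>j. j \<in> {1..N} \<Longrightarrow> j \<noteq> j0 \<Longrightarrow> p j = p' j"
    using assms(2) hamming_le_1_agree_except[of N p p'] by (auto simp: nbhd1_def)
  have nonneg: "\<And>j. j \<in> {1..N} \<Longrightarrow> 0 \<le> p' j"
    using assms(2) by (simp add: nbhd1_def unit_cube_def)
  define B B' where "B = Bcount N q p" and "B' = Bcount N q p'"
  have k: "ktilde N q p = last_fixpoint N B" and k': "ktilde N q p' = last_fixpoint N B'"
    by (simp_all add: B_def B'_def ktilde_eq_last_fixpoint)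
  have counts: "mono B" "mono B'" "B 0 = 0" "B' 0 = 0" "B N \<le> N" "B' N \<le> N"
    "\<And>i. B' i \<le> B i + 1" "\<And>i. B i \<le> B' i + 1"
    "\<And>k i. B' k < B k \<Longrightarrow> i \<le> k \<Longrightarrow> B' i \<le> B i"
    using mono_Bcount[OF assms(1)] Bcount_0 Bcount_le
      Bcount_change_coordinate[where x = p and y = p', OF agree]
      Bcount_change_coordinate[where x = p' and y = p, OF agree[symmetric]]
      Bcount_decrease_coordinate[where x = p and y = p', OF agree assms(1) nonneg]
    by (auto simp: B_def B'_def)
  consider "ktilde N q p' = ktilde N q p" | "ktilde N q p < ktilde N q p'"
    | "ktilde N q p' < ktilde N q p" by linarith
  then show ?thesis
  proof cases
    case 2
    have "B (ktilde N q p') = ktilde N q p' - 1"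
      unfolding k' by (rule last_fixpoint_increase) (use counts 2 in \<open>auto simp: k k'\<close>)
    then show ?thesis using 2 ktilde_le[of N q p'] by (simp add: Lset_def B_def)
  next
    case 3
    have "ktilde N q p' = istar N q p \<or> (istar N q p < ktilde N q p' \<and> B (ktilde N q p') = ktilde N q p')"
      unfolding k' by (rule last_fixpoint_decrease)
        (use counts 3 istar_greatest[of _ N q p] istar_cases[of N q p] in \<open>auto simp: k k' B_def\<close>)
    then show ?thesis using 3 by (auto simp: Rset_def B_def)
  qed simp
qed

lemma finite_range_FDP_BH:
  assumes "finite H0"
  shows "finite (range (FDP_BH N q H0))"
proof (rule finite_subset)
  show "range (FDP_BH N q H0) \<subseteq> (\<lambda>(a, b). real a / real b) ` ({..card H0} \<times> {..max N 1})"
  proof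
    fix r assume "r \<in> range (FDP_BH N q H0)"
    then obtain x where "r = FDP_BH N q H0 x" by blast
    moreover have "card {j \<in> H0. x j < real (ktilde N q x) * q / real N} \<le> card H0"
      using assms by (intro card_mono) auto
    moreover have "max (ktilde N q x) 1 \<le> max N 1" using ktilde_le[of N q x] by simp
    ultimately show "r \<in> (\<lambda>(a, b). real a / real b) ` ({..card H0} \<times> {..max N 1})"
      unfolding FDP_BH_def by force
  qed
qed simp

theorem theorem5:
  fixes N :: nat and q :: real and H0 H1 :: "nat set" and p :: "nat \<Rightarrow> real"
  assumes "0 < q" and "q < 1"
    and "H0 \<union> H1 = {1..N}" and "H0 \<inter> H1 = {}"
    and "p \<in> unit_cube N"
  shows "Max (FDP_BH N q H0 ` nbhd1 N p) =
         Max ((FDP_i N q H0 p) `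
              {i \<in> Lset N q p \<union> Rset N q p \<union> {ktilde N q p}. FDP_i_feasible N q p i})"
proof -
  have "finite H0" using assms(3) by (metis finite_Un finite_atLeastAtMost)
  then have "finite (FDP_BH N q H0 ` nbhd1 N p)"
    by (rule finite_subset[OF image_mono[OF subset_UNIV] finite_range_FDP_BH])
  moreover have "nbhd1 N p \<noteq> {}"
    using assms(5) by (auto simp: nbhd1_def hamming_def)
  moreover have "ktilde N q ` nbhd1 N p \<subseteq> Lset N q p \<union> Rset N q p \<union> {ktilde N q p}"
    using ktilde_nbhd1[of q] assms(1) by (auto simp: less_imp_le)
  moreover have "finite (Lset N q p \<union> Rset N q p \<union> {ktilde N q p})"
    by (simp add: Lset_def Rset_def)
  ultimately show ?thesis
    unfolding FDP_i_def FDP_i_feasible_def by (rule Max_image_eq_Max_fibres)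
qed

end
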